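(* Let $a,n,b,p,k$ be positive integers with $a>b$. If there exist a partition of $\{1,\dots,p\}$ into $k$ sum-free subsets and a $b$-WS-template $(A_1,\dots,A_{n+1})$ with width $a$ and $n+1$ colors, then there exists a partition of $\{1,\dots,pa+b\}$ into $k+n$ weakly sum-free subsets.
   Context: A set $A \subseteq \mathbb{N}$ is sum-free if for all $(a,b)\in A^2$ (allowing $a=b$), $a+b \notin A$; it is weakly sum-free if for all $(a,b)\in A^2$ with $a\neq b$, $a+b\notin A$. For positive integers $a>b$, let $\pi(x) = (x \bmod a) + a\cdot \mathbb{1}_{\{0,\dots,b\}}(x \bmod a)$. For positive integers $a,m,b$ with $a>b$, a partition $(A_1,\dots,A_m)$ of $\{1,\dots,a+b\}$ is a $b$-WS-template with width $a$ and $m$ colors if: (i) every $A_i$ is weakly sum-free; (ii) every $A_i\setminus\{1,\dots,b\}$ is sum-free; (iii) for all $(x,y)\in A_m^2$, $x+y>b+2a$ implies $x+y-2a\notin A_m$; (iv) for all $i\in\{1,\dots,m-1\}$ and $(x,y)\in A_i^2$, $x+y>a+b$ implies $\pi(x+y)\notin A_i$. *)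

theory Defs
  imports Main
begin

definition sum_free :: "nat set \<Rightarrow> bool" where
  "sum_free A \<longleftrightarrow> (\<forall>a\<in>A. \<forall>b\<in>A. a + b \<notin> A)"

definition weakly_sum_free :: "nat set \<Rightarrow> bool" where
  "weakly_sum_free A \<longleftrightarrow> (\<forall>a\<in>A. \<forall>b\<in>A. a \<noteq> b \<longrightarrow> a + b \<notin> A)"

definition is_partition :: "nat set \<Rightarrow> nat \<Rightarrow> (nat \<Rightarrow> nat set) \<Rightarrow> bool" where
  "is_partition S m A \<longleftrightarrow>
     (\<Union>i\<in>{1..m}. A i) = S \<and>
     (\<forall>i\<in>{1..m}. \<forall>j\<in>{1..m}. i \<noteq> j \<longrightarrow> A i \<inter> A j = {})"

definition pi_map :: "nat \<Rightarrow> nat \<Rightarrow> nat \<Rightarrow> nat" where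
  "pi_map a b x = x mod a + (if x mod a \<in> {0..b} then a else 0)"

definition WS_template :: "nat \<Rightarrow> nat \<Rightarrow> nat \<Rightarrow> (nat \<Rightarrow> nat set) \<Rightarrow> bool" where
  "WS_template b a m A \<longleftrightarrow>
     0 < a \<and> 0 < m \<and> 0 < b \<and> b < a \<and>
     is_partition {1..a+b} m A \<and>
     (\<forall>i\<in>{1..m}. weakly_sum_free (A i)) \<and>
     (\<forall>i\<in>{1..m}. sum_free (A i - {1..b})) \<and>
     (\<forall>x\<in>A m. \<forall>y\<in>A m. x + y > b + 2*a \<longrightarrow> x + y - 2*a \<notin> A m) \<and>
     (\<forall>i\<in>{1..m-1}. \<forall>x\<in>A i. \<forall>y\<in>A i. x + y > a + b \<longrightarrow> pi_map a b (x + y) \<notin> A i)"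

end

theory Submission
  imports Defs
begin

text \<open>Every positive integer x is written uniquely as x = t a + r with r \<in> {1..a+b}, where
  t = 0 whenever r \<le> b. The colour of x is read off from the class of r in the template; for the
  last template colour it is refined by the class of t + 1 in the sum-free partition of {1..p}.
  Adding x and y adds the blocks t and the residues r, with a carry of one or two blocks when the
  residues overflow a + b. Without carry, the template's (weak) sum-freeness applies to the
  residues; with one carry, sum-freeness of the partition of {1..p} applies to the blocks for the
  last colour, and condition (iv) applies to the residues for the other colours (the residue of
  an overflowing sum is exactly its image under pi_map); with two carries, condition (iii) applies.\<close>

definition block :: "nat \<Rightarrow> nat \<Rightarrow> nat \<Rightarrow> nat" where
  "block a b x = (if x \<le> b then 0 else (x - b - 1) div a)"

definition residue :: "nat \<Rightarrow> nat \<Rightarrow> nat \<Rightarrow> nat" where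
  "residue a b x = x - block a b x * a"

lemma block_residue_decomp: "x = block a b x * a + residue a b x"
proof -
  have "block a b x * a \<le> x"
    unfolding block_def using order_trans[OF div_times_less_eq_dividend diff_le_self] by simp
  then show ?thesis by (simp add: residue_def)
qed

lemma block_residue_small [simp]:
  assumes "x \<le> a + b"
  shows "block a b x = 0" "residue a b x = x"
  using assms by (auto simp: block_def residue_def)

lemma residue_bounds:
  assumes "0 < a" "b < x"
  shows "b < residue a b x" "residue a b x \<le> a + b"
proof -
  define q where "q = (x - b - 1) div a"
  define m where "m = (x - b - 1) mod a"
  have "x = q * a + (b + 1 + m)" using assms(2) by (simp add: q_def m_def)
  moreover have "m < a" using assms(1) by (simp add: m_def)
  moreover have "residue a b x = x - q * a"
    using assms(2) by (simp add: residue_def block_def q_def)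
  ultimately show "b < residue a b x" "residue a b x \<le> a + b" by simp_all
qed

lemma residue_le_imp_le:
  assumes "0 < a" "residue a b x \<le> b"
  shows "x \<le> b"
  using residue_bounds(1)[OF assms(1), of b x] assms(2) by linarith

lemma residue_pos:
  assumes "0 < a" "0 < x"
  shows "0 < residue a b x"
  using residue_bounds(1)[OF assms(1), of b x] assms(2) by (cases "x \<le> b") auto

lemma residue_le:
  assumes "0 < a"
  shows "residue a b x \<le> a + b"
  using residue_bounds(2)[OF assms, of b x] by (cases "x \<le> b") auto

lemma block_residue_unique:
  assumes "0 < a" "b < r" "r \<le> a + b"
  shows "block a b (t * a + r) = t" "residue a b (t * a + r) = r"
proof -
  define m where "m = r - b - 1"
  have "t * a + r - b - 1 = m + t * a" "m < a" using assms by (simp_all add: m_def)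
  moreover have "(m + t * a) div a = t" if "m < a" using assms(1) that by simp
  ultimately have "(t * a + r - b - 1) div a = t" by simp
  then have "block a b (t * a + r) = t" using assms(2) by (simp add: block_def)
  then show "block a b (t * a + r) = t" "residue a b (t * a + r) = r"
    by (simp_all add: residue_def)
qed

lemma block_residue_shift:
  assumes "0 < a" "b < z"
  shows "block a b (t * a + z) = t + block a b z" "residue a b (t * a + z) = residue a b z"
proof -
  have eq: "t * a + z = (t + block a b z) * a + residue a b z"
    by (metis block_residue_decomp add.assoc add_mult_distrib)
  note unique = block_residue_unique[OF assms(1) residue_bounds[OF assms], of "t + block a b z"]
  show "block a b (t * a + z) = t + block a b z" unfolding eq by (rule unique(1))
  show "residue a b (t * a + z) = residue a b z" unfolding eq by (rule unique(2))
qed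

lemma block_residue_add:
  fixes a b x y :: nat
  assumes "0 < a"
  defines "s \<equiv> residue a b x + residue a b y"
  shows "block a b (x + y) = block a b x + block a b y + block a b s"
    and "residue a b (x + y) = residue a b s"
proof -
  have "block a b (x + y) = block a b x + block a b y + block a b s
      \<and> residue a b (x + y) = residue a b s"
  proof (cases "b < s")
    case True
    have "(block a b x + block a b y) * a + s
        = (block a b x * a + residue a b x) + (block a b y * a + residue a b y)"
      unfolding s_def by (simp add: algebra_simps)
    also have "\<dots> = x + y" by (simp only: flip: block_residue_decomp)
    finally show ?thesis
      using block_residue_shift[OF assms(1) True, of "block a b x + block a b y"] by simp
  next
    case False
    then have "residue a b x \<le> b" "residue a b y \<le> b" by (simp_all add: s_def)
    then have "x \<le> b" "y \<le> b" using residue_le_imp_le[OF assms(1)] by blast+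
    then show ?thesis unfolding s_def by simp
  qed
  then show "block a b (x + y) = block a b x + block a b y + block a b s"
    and "residue a b (x + y) = residue a b s" by simp_all
qed

lemma pi_map_eq_residue:
  assumes "0 < a" "b < a" "b < z"
  shows "pi_map a b z = residue a b z"
proof -
  define r where "r = residue a b z"
  have r: "b < r" "r \<le> a + b" using residue_bounds[OF assms(1,3)] by (simp_all add: r_def)
  have "z mod a = r mod a"
    using block_residue_decomp[of z a b] by (metis r_def mod_mult_self3)
  show ?thesis
  proof (cases "r < a")
    case True
    then show ?thesis using \<open>z mod a = r mod a\<close> r by (simp add: pi_map_def r_def)
  next
    case False
    then have "r mod a = r - a" "r - a \<le> b" using r assms(2) by (simp_all add: le_mod_geq)
    then show ?thesis using \<open>z mod a = r mod a\<close> False by (simp add: pi_map_def r_def)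
  qed
qed

lemma block_less:
  assumes "0 < a" "0 < p" "x \<le> p * a + b"
  shows "block a b x < p"
proof (cases "x \<le> b")
  case False
  then have "x - b - 1 < p * a" using assms by linarith
  then show ?thesis using assms(1) False by (simp add: block_def div_less_iff_less_mult)
qed (simp add: block_def assms(2))

lemma weakly_sum_free_subset: "weakly_sum_free A \<Longrightarrow> B \<subseteq> A \<Longrightarrow> weakly_sum_free B"
  unfolding weakly_sum_free_def by blast

lemma residue_add_notin_if_no_carry:
  assumes "0 < a" "weakly_sum_free A" "sum_free (A - {1..b})" "x \<noteq> y"
    and "residue a b x \<in> A" "residue a b y \<in> A"
    and "residue a b x + residue a b y \<le> a + b"
  shows "residue a b (x + y) \<notin> A"
proof -
  define r s where "r = residue a b x" and "s = residue a b y"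
  have sum: "residue a b (x + y) = r + s"
    using block_residue_add(2)[OF assms(1), of b x y] assms(7) by (simp add: r_def s_def)
  have "r \<in> A" "s \<in> A" using assms(5,6) by (simp_all add: r_def s_def)
  have "r + s \<notin> A"
  proof (cases "r = s")
    case False
    then show ?thesis using assms(2) \<open>r \<in> A\<close> \<open>s \<in> A\<close> unfolding weakly_sum_free_def by blast
  next
    case True
    have "\<not> r \<le> b"
    proof
      assume "r \<le> b"
      then have "residue a b x \<le> b" "residue a b y \<le> b" using True by (simp_all add: r_def s_def)
      then have "x \<le> b" "y \<le> b" using residue_le_imp_le[OF assms(1)] by blast+
      then show False using True assms(4) by (simp add: r_def s_def)
    qed
    then have "r \<in> A - {1..b}" "r + r \<notin> {1..b}" using \<open>r \<in> A\<close> by auto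
    moreover have "r + r \<notin> A - {1..b}"
      using assms(3) \<open>r \<in> A - {1..b}\<close> unfolding sum_free_def by blast
    ultimately show ?thesis using True by blast
  qed
  then show ?thesis using sum by simp
qed

lemma weakly_sum_free_residue_class:
  assumes "0 < a" "b < a" "weakly_sum_free A" "sum_free (A - {1..b})"
    and pi_map_notin: "\<forall>x\<in>A. \<forall>y\<in>A. a + b < x + y \<longrightarrow> pi_map a b (x + y) \<notin> A"
  shows "weakly_sum_free {x. 0 < x \<and> residue a b x \<in> A}"
  unfolding weakly_sum_free_def
proof (intro ballI impI)
  fix x y assume x: "x \<in> {x. 0 < x \<and> residue a b x \<in> A}"
    and y: "y \<in> {x. 0 < x \<and> residue a b x \<in> A}" and "x \<noteq> y"
  define s where "s = residue a b x + residue a b y"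
  have "residue a b (x + y) \<notin> A"
  proof (cases "s \<le> a + b")
    case True
    then show ?thesis
      using residue_add_notin_if_no_carry assms(1,3,4) \<open>x \<noteq> y\<close> x y by (simp add: s_def)
  next
    case False
    have "residue a b (x + y) = pi_map a b s"
      using block_residue_add(2)[OF assms(1), of b x y] pi_map_eq_residue[OF assms(1,2), of s] False
      by (simp add: s_def)
    then show ?thesis using pi_map_notin x y False by (simp add: s_def)
  qed
  then show "x + y \<notin> {x. 0 < x \<and> residue a b x \<in> A}" by simp
qed

lemma weakly_sum_free_residue_block_class:
  assumes "0 < a" "b < a" "weakly_sum_free A" "sum_free (A - {1..b})"
    and double_carry: "\<forall>x\<in>A. \<forall>y\<in>A. b + 2 * a < x + y \<longrightarrow> x + y - 2 * a \<notin> A"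
    and "sum_free Q"
  shows "weakly_sum_free {x. 0 < x \<and> residue a b x \<in> A \<and> block a b x + 1 \<in> Q}"
  unfolding weakly_sum_free_def
proof (intro ballI impI)
  fix x y assume x: "x \<in> {x. 0 < x \<and> residue a b x \<in> A \<and> block a b x + 1 \<in> Q}"
    and y: "y \<in> {x. 0 < x \<and> residue a b x \<in> A \<and> block a b x + 1 \<in> Q}" and "x \<noteq> y"
  define s where "s = residue a b x + residue a b y"
  have "s \<le> 2 * a + 2 * b"
    using residue_le[OF assms(1), of b x] residue_le[OF assms(1), of b y] by (simp add: s_def)
  consider "s \<le> a + b" | "a + b < s" "s \<le> 2 * a + b" | "2 * a + b < s" by linarith
  then have "residue a b (x + y) \<notin> A \<or> block a b (x + y) + 1 \<notin> Q"
  proof cases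
    case 1
    then show ?thesis
      using residue_add_notin_if_no_carry assms(1,3,4) \<open>x \<noteq> y\<close> x y by (simp add: s_def)
  next
    case 2
    have "block a b (1 * a + (s - a)) = 1"
      by (rule block_residue_unique(1)[OF assms(1)]) (use 2 in linarith)+
    moreover have "1 * a + (s - a) = s" using 2 by simp
    ultimately have "block a b s = 1" by simp
    then have "block a b (x + y) + 1 = (block a b x + 1) + (block a b y + 1)"
      using block_residue_add(1)[OF assms(1), of b x y] by (simp add: s_def)
    then show ?thesis using assms(6) x y unfolding sum_free_def by fastforce
  next
    case 3
    have "residue a b (2 * a + (s - 2 * a)) = s - 2 * a"
      by (rule block_residue_unique(2)[OF assms(1)]) (use 3 \<open>s \<le> 2 * a + 2 * b\<close> assms(2) in linarith)+
    moreover have "2 * a + (s - 2 * a) = s" using 3 by simp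
    ultimately have "residue a b s = s - 2 * a" by simp
    then have "residue a b (x + y) = s - 2 * a"
      using block_residue_add(2)[OF assms(1), of b x y] 3 by (simp add: s_def)
    then show ?thesis using double_carry x y 3 by (simp add: s_def)
  qed
  then show "x + y \<notin> {x. 0 < x \<and> residue a b x \<in> A \<and> block a b x + 1 \<in> Q}" by auto
qed

lemma is_partition_vimage:
  assumes "is_partition T m A" "f ` S \<subseteq> T"
  shows "is_partition S m (\<lambda>i. S \<inter> f -` A i)"
  using assms unfolding is_partition_def by blast

lemma is_partition_split_last:
  assumes B: "is_partition S (n + 1) B" and P: "is_partition T k P" and g: "g ` B (n + 1) \<subseteq> T"
  shows "is_partition S (k + n) (\<lambda>i. if i \<le> k then B (n + 1) \<inter> g -` P i else B (i - k))"
    (is "is_partition S (k + n) ?C")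
  unfolding is_partition_def
proof (intro conjI ballI impI)
  have B_cover: "(\<Union>i\<in>{1..n + 1}. B i) = S"
    and B_disj: "\<And>i j. i \<in> {1..n + 1} \<Longrightarrow> j \<in> {1..n + 1} \<Longrightarrow> i \<noteq> j \<Longrightarrow> B i \<inter> B j = {}"
    using B unfolding is_partition_def by blast+
  have P_cover: "(\<Union>i\<in>{1..k}. P i) = T"
    and P_disj: "\<And>i j. i \<in> {1..k} \<Longrightarrow> j \<in> {1..k} \<Longrightarrow> i \<noteq> j \<Longrightarrow> P i \<inter> P j = {}"
    using P unfolding is_partition_def by blast+
  show "(\<Union>i\<in>{1..k + n}. ?C i) = S"
  proof
    show "(\<Union>i\<in>{1..k + n}. ?C i) \<subseteq> S"
      using B_cover by (force split: if_splits)
    show "S \<subseteq> (\<Union>i\<in>{1..k + n}. ?C i)"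
    proof
      fix x assume "x \<in> S"
      then obtain j where j: "j \<in> {1..n + 1}" "x \<in> B j" using B_cover by blast
      show "x \<in> (\<Union>i\<in>{1..k + n}. ?C i)"
      proof (cases "j = n + 1")
        case True
        then obtain i where "i \<in> {1..k}" "g x \<in> P i" using g j P_cover by blast
        then show ?thesis using j True by (intro UN_I[of i]) auto
      next
        case False
        then show ?thesis using j by (intro UN_I[of "k + j"]) auto
      qed
    qed
  qed
  fix i j assume ij: "i \<in> {1..k + n}" "j \<in> {1..k + n}" "i \<noteq> j"
  show "?C i \<inter> ?C j = {}"
  proof (cases "i \<le> k"; cases "j \<le> k")
    assume "i \<le> k" "j \<le> k"
    then show ?thesis using P_disj[of i j] ij by auto
  next
    assume "i \<le> k" "\<not> j \<le> k"
    have "B (n + 1) \<inter> B (j - k) = {}" by (rule B_disj) (use ij \<open>\<not> j \<le> k\<close> in auto)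
    then show ?thesis using \<open>i \<le> k\<close> \<open>\<not> j \<le> k\<close> by auto
  next
    assume "\<not> i \<le> k" "j \<le> k"
    have "B (n + 1) \<inter> B (i - k) = {}" by (rule B_disj) (use ij \<open>\<not> i \<le> k\<close> in auto)
    then show ?thesis using \<open>\<not> i \<le> k\<close> \<open>j \<le> k\<close> by auto
  next
    assume "\<not> i \<le> k" "\<not> j \<le> k"
    have "B (i - k) \<inter> B (j - k) = {}" by (rule B_disj) (use ij \<open>\<not> i \<le> k\<close> \<open>\<not> j \<le> k\<close> in auto)
    then show ?thesis using \<open>\<not> i \<le> k\<close> \<open>\<not> j \<le> k\<close> by auto
  qed
qed

definition template_colouring ::
    "nat \<Rightarrow> nat \<Rightarrow> nat \<Rightarrow> nat \<Rightarrow> nat \<Rightarrow> (nat \<Rightarrow> nat set) \<Rightarrow> (nat \<Rightarrow> nat set) \<Rightarrow> nat \<Rightarrow> nat set"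
  where "template_colouring a b p k n P A i =
    (if i \<le> k then ({1..p * a + b} \<inter> residue a b -` A (n + 1)) \<inter> (\<lambda>x. block a b x + 1) -` P i
     else {1..p * a + b} \<inter> residue a b -` A (i - k))"

lemma is_partition_template_colouring:
  assumes "WS_template b a (n + 1) A" "0 < p" "is_partition {1..p} k P"
  shows "is_partition {1..p * a + b} (k + n) (template_colouring a b p k n P A)"
proof -
  have "0 < a" "is_partition {1..a + b} (n + 1) A"
    using assms(1) unfolding WS_template_def by simp_all
  then show ?thesis
    unfolding template_colouring_def [abs_def]
  proof (intro is_partition_split_last[OF is_partition_vimage assms(3)])
    show "residue a b ` {1..p * a + b} \<subseteq> {1..a + b}"
      using residue_pos[OF \<open>0 < a\<close>] residue_le[OF \<open>0 < a\<close>] by (force simp: Suc_le_eq)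
    show "(\<lambda>x. block a b x + 1) ` ({1..p * a + b} \<inter> residue a b -` A (n + 1)) \<subseteq> {1..p}"
      using block_less[OF \<open>0 < a\<close> assms(2)] by (auto simp: Suc_le_eq)
  qed
qed

lemma weakly_sum_free_template_colouring:
  assumes "WS_template b a (n + 1) A" "\<forall>i\<in>{1..k}. sum_free (P i)" "i \<in> {1..k + n}"
  shows "weakly_sum_free (template_colouring a b p k n P A i)"
proof -
  have a: "0 < a" "b < a"
    and A: "\<forall>i\<in>{1..n + 1}. weakly_sum_free (A i)" "\<forall>i\<in>{1..n + 1}. sum_free (A i - {1..b})"
    "\<forall>x\<in>A (n + 1). \<forall>y\<in>A (n + 1). b + 2 * a < x + y \<longrightarrow> x + y - 2 * a \<notin> A (n + 1)"
    "\<forall>i\<in>{1..n}. \<forall>x\<in>A i. \<forall>y\<in>A i. a + b < x + y \<longrightarrow> pi_map a b (x + y) \<notin> A i"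
    using assms(1) unfolding WS_template_def by auto
  show ?thesis
  proof (cases "i \<le> k")
    case True
    have "weakly_sum_free {x. 0 < x \<and> residue a b x \<in> A (n + 1) \<and> block a b x + 1 \<in> P i}"
      using weakly_sum_free_residue_block_class[OF a] A assms(2,3) True by simp
    then show ?thesis by (rule weakly_sum_free_subset) (auto simp: template_colouring_def True)
  next
    case False
    then have "i - k \<in> {1..n}" using assms(3) by auto
    then have "weakly_sum_free {x. 0 < x \<and> residue a b x \<in> A (i - k)}"
      using weakly_sum_free_residue_class[OF a] A by simp
    then show ?thesis by (rule weakly_sum_free_subset) (auto simp: template_colouring_def False)
  qed
qed

theorem theorem3p17:
  fixes a n b p k :: nat
  assumes "0 < a" "0 < n" "0 < b" "0 < p" "0 < k" "a > b"
    and "\<exists>P. is_partition {1..p} k P \<and> (\<forall>i\<in>{1..k}. sum_free (P i))"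
    and "\<exists>A. WS_template b a (n + 1) A"
  shows "\<exists>C. is_partition {1..p*a+b} (k + n) C \<and> (\<forall>i\<in>{1..k+n}. weakly_sum_free (C i))"
proof -
  obtain P where P: "is_partition {1..p} k P" "\<forall>i\<in>{1..k}. sum_free (P i)"
    using assms(7) by blast
  obtain A where A: "WS_template b a (n + 1) A" using assms(8) by blast
  show ?thesis
    using is_partition_template_colouring[OF A assms(4) P(1)]
      weakly_sum_free_template_colouring[OF A P(2)] by blast
qed

end
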